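(* Let $G$ be a bridgeless cubic graph and let $J_1,J_2,J_3$ be three joins of $G$ such that the weak core of $G$ with respect to $J_1,J_2,J_3$ is a weak $k$-core, i.e. $k=|E_0|+\frac{3}{2}\sum_{i=1}^3 n(J_i)$. Then $$\sum_{i=1}^3|\overline{J_i}|_{odd}\leq 2k.$$
   Context: A join of a graph $H$ is a set $J\subseteq E(H)$ such that every vertex has degree of the same parity in $H$ and in the spanning subgraph $(V(H),J)$. In a cubic graph every vertex has degree $1$ or $3$ in a join $J$; a vertex of degree $3$ in $J$ is a $J$-vertex and $n(J)$ is the number of $J$-vertices. Given three joins $J_1,J_2,J_3$, $E_i$ ($i=0,\dots,3$) is the set of edges lying in precisely $i$ of them; the weak core with respect to them is $G[E_0\cup E_2\cup E_3]$, and it is called a weak $l$-core (more precisely a $k'$-weak $l$-core, where $k'$ is the number of $J_i$ that are not 1-factors) with $l=|E_0|+\frac{3}{2}\sum_{i=1}^3 n(J_i)$. $\overline{J}$ denotes the complement of $J$, i.e. the spanning subgraph $(V(G),E(G)\setminus J)$, and $|H|_{odd}$ denotes the number of components of $H$ with an odd number of vertices. *)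

theory Defs
  imports Complex_Main
begin

text \<open>Finite multigraphs (parallel edges allowed): vertex set V, edge set E, and
  ends e = set of the two distinct end vertices of edge e.\<close>

definition multigraph :: "'v set \<Rightarrow> 'e set \<Rightarrow> ('e \<Rightarrow> 'v set) \<Rightarrow> bool" where
  "multigraph V E ends \<longleftrightarrow> finite V \<and> finite E \<and>
     (\<forall>e\<in>E. ends e \<subseteq> V \<and> card (ends e) = 2)"

definition deg :: "'e set \<Rightarrow> ('e \<Rightarrow> 'v set) \<Rightarrow> 'v \<Rightarrow> nat" where
  "deg F ends v = card {e\<in>F. v \<in> ends e}"

definition cubic :: "'v set \<Rightarrow> 'e set \<Rightarrow> ('e \<Rightarrow> 'v set) \<Rightarrow> bool" where
  "cubic V E ends \<longleftrightarrow> multigraph V E ends \<and> (\<forall>v\<in>V. deg E ends v = 3)"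

definition adj :: "'e set \<Rightarrow> ('e \<Rightarrow> 'v set) \<Rightarrow> 'v \<Rightarrow> 'v \<Rightarrow> bool" where
  "adj F ends u w \<longleftrightarrow> (\<exists>e\<in>F. ends e = {u, w})"

definition connected_in :: "'e set \<Rightarrow> ('e \<Rightarrow> 'v set) \<Rightarrow> 'v \<Rightarrow> 'v \<Rightarrow> bool" where
  "connected_in F ends u w \<longleftrightarrow> (adj F ends)\<^sup>*\<^sup>* u w"

definition is_bridge :: "'v set \<Rightarrow> 'e set \<Rightarrow> ('e \<Rightarrow> 'v set) \<Rightarrow> 'e \<Rightarrow> bool" where
  "is_bridge V E ends e \<longleftrightarrow> e \<in> E \<and>
     (\<exists>u w. ends e = {u, w} \<and> \<not> connected_in (E - {e}) ends u w)"

definition bridgeless :: "'v set \<Rightarrow> 'e set \<Rightarrow> ('e \<Rightarrow> 'v set) \<Rightarrow> bool" where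
  "bridgeless V E ends \<longleftrightarrow> (\<forall>e\<in>E. \<not> is_bridge V E ends e)"

definition components :: "'v set \<Rightarrow> 'e set \<Rightarrow> ('e \<Rightarrow> 'v set) \<Rightarrow> 'v set set" where
  "components V F ends = (\<lambda>v. {w\<in>V. connected_in F ends v w}) ` V"

definition odd_components :: "'v set \<Rightarrow> 'e set \<Rightarrow> ('e \<Rightarrow> 'v set) \<Rightarrow> nat" where
  "odd_components V F ends = card {C\<in>components V F ends. odd (card C)}"

definition is_join :: "'v set \<Rightarrow> 'e set \<Rightarrow> ('e \<Rightarrow> 'v set) \<Rightarrow> 'e set \<Rightarrow> bool" where
  "is_join V E ends J \<longleftrightarrow> J \<subseteq> E \<and>
     (\<forall>v\<in>V. even (deg J ends v) = even (deg E ends v))"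

definition n_join :: "'v set \<Rightarrow> ('e \<Rightarrow> 'v set) \<Rightarrow> 'e set \<Rightarrow> nat" where
  "n_join V ends J = card {v\<in>V. deg J ends v = 3}"

definition E_zero :: "'e set \<Rightarrow> 'e set \<Rightarrow> 'e set \<Rightarrow> 'e set \<Rightarrow> 'e set" where
  "E_zero E J1 J2 J3 = {e\<in>E. e \<notin> J1 \<and> e \<notin> J2 \<and> e \<notin> J3}"

end

theory Submission
  imports Defs
begin

(* Discharging. For each join J_i, a vertex p receives the charge 12 if it is a J_i-vertex, and
   otherwise a charge determined by the number of joins containing its unique J_i-edge: 6 if two,
   8 or 12 if three (8 when p is a J-vertex of no join). The J_j-edges leaving an odd component K of
   G - J_i must also lie in J_i, so by parity K contains a J_i-edge shared with J_j and one shared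
   with J_k; hence K collects charge 12 unless its only such vertex p has all its joins on one edge
   and two E_0-edges. In that case the two E_0-neighbours of p each receive 2 extra units for J_i,
   paid from their other two joins. At each vertex the charges over the three joins add up to at
   most 12 times the number of incident E_0-edges plus 36 times the number of joins for which it is
   a J-vertex; summing over all vertices gives 12 \<Sum>|G - J_i|_odd \<le> 24|E_0| + 36 \<Sum> n(J_i) = 24k. *)

lemma sum_card_filter_swap:
  assumes "finite A" "finite B"
  shows "(\<Sum>a\<in>A. card {b\<in>B. R a b}) = (\<Sum>b\<in>B. card {a\<in>A. R a b})"
  using sum.swap_restrict[OF assms, of "\<lambda>_ _. 1::nat" R] by simp

lemma card_filter_three:
  assumes "i \<noteq> j" "i \<noteq> k" "j \<noteq> k"
  shows "card {l\<in>{i, j, k}. P l} = of_bool (P i) + of_bool (P j) + of_bool (P k)"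
proof -
  have "card {l\<in>{i, j, k}. P l} = (\<Sum>l\<in>{i, j, k}. if P l then 1 else 0)"
    by (simp add: sum.inter_filter[symmetric])
  then show ?thesis using assms by simp
qed

lemma odd_le_3_cases: "odd (n::nat) \<Longrightarrow> n \<le> 3 \<Longrightarrow> n = 1 \<or> n = 3"
  by (cases n; cases "n - 1"; cases "n - 2") auto

lemma card_2_obtain_other:
  assumes "card S = 2" "p \<in> S"
  obtains q where "S = {p, q}" "q \<noteq> p"
proof -
  have "card (S - {p}) = 1" using assms by (simp add: card_Diff_singleton_if)
  then obtain q where "S - {p} = {q}" by (auto simp: card_1_singleton_iff)
  then show ?thesis using that assms(2) by blast
qed

section \<open>Components and degree parity\<close>

lemma connected_in_sym: "connected_in F ends u w \<Longrightarrow> connected_in F ends w u"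
proof -
  have "symp (adj F ends)" by (auto intro: sympI simp: adj_def insert_commute)
  then show "connected_in F ends u w \<Longrightarrow> connected_in F ends w u"
    unfolding connected_in_def by (auto dest: sympD[OF symp_rtranclp])
qed

lemma connected_in_trans:
  "connected_in F ends u w \<Longrightarrow> connected_in F ends w x \<Longrightarrow> connected_in F ends u x"
  unfolding connected_in_def by (rule rtranclp_trans)

lemma connected_in_edge: "e \<in> F \<Longrightarrow> ends e = {u, w} \<Longrightarrow> connected_in F ends u w"
  unfolding connected_in_def adj_def by (rule r_into_rtranclp) blast

lemma components_subset: "C \<in> components V F ends \<Longrightarrow> C \<subseteq> V"
  by (auto simp: components_def)

lemma components_disjoint:
  assumes "C \<in> components V F ends" "D \<in> components V F ends" "C \<noteq> D"
  shows "C \<inter> D = {}"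
proof -
  have same: "{w\<in>V. connected_in F ends p w} = {w\<in>V. connected_in F ends v w}"
    if "connected_in F ends v p" for v p
    using connected_in_trans[OF that] connected_in_trans[OF connected_in_sym[OF that]] by blast
  obtain v w where C: "C = {x\<in>V. connected_in F ends v x}" and D: "D = {x\<in>V. connected_in F ends w x}"
    using assms(1,2) by (auto simp: components_def)
  show ?thesis
  proof (rule ccontr)
    assume "C \<inter> D \<noteq> {}"
    then obtain p where vp: "connected_in F ends v p" and wp: "connected_in F ends w p"
      using C D by blast
    have "C = D" unfolding C D using same[OF vp] same[OF wp] by simp
    then show False using assms(3) by contradiction
  qed
qed

lemma components_closed:
  assumes "C \<in> components V F ends" "e \<in> F" "ends e \<subseteq> V" "card (ends e) = 2"
    and "ends e \<inter> C \<noteq> {}"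
  shows "ends e \<subseteq> C"
proof -
  obtain v where C: "C = {w\<in>V. connected_in F ends v w}"
    using assms(1) by (auto simp: components_def)
  obtain p where p: "p \<in> ends e" "p \<in> C" using assms(5) by blast
  obtain q where q: "ends e = {p, q}" using card_2_obtain_other[OF assms(4) p(1)] by blast
  have "connected_in F ends v p" using p(2) C by blast
  then have "connected_in F ends v q"
    by (rule connected_in_trans[OF _ connected_in_edge[of e F ends p q, OF assms(2) q]])
  moreover have "q \<in> V" using q assms(3) by blast
  ultimately have "q \<in> C" using C by blast
  then show ?thesis unfolding q using p(2) by simp
qed

lemma even_sum_deg_if_closed:
  assumes "finite K" "finite F" "\<And>e. e \<in> F \<Longrightarrow> card (ends e) = 2"
    and "\<And>e. e \<in> F \<Longrightarrow> ends e \<inter> K \<noteq> {} \<Longrightarrow> ends e \<subseteq> K"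
  shows "even (\<Sum>p\<in>K. deg F ends p)"
proof -
  have "(\<Sum>p\<in>K. deg F ends p) = (\<Sum>e\<in>F. card {p\<in>K. p \<in> ends e})"
    unfolding deg_def by (rule sum_card_filter_swap[OF assms(1,2)])
  moreover have "even (card {p\<in>K. p \<in> ends e})" if "e \<in> F" for e
  proof -
    have "{p\<in>K. p \<in> ends e} = ends e \<inter> K" by auto
    moreover have "ends e \<inter> K = {} \<or> ends e \<inter> K = ends e" using assms(4)[OF that] by blast
    ultimately show ?thesis using assms(3)[OF that] by (metis card.empty even_zero even_numeral)
  qed
  ultimately show ?thesis by (simp add: dvd_sum)
qed

lemma odd_components_weighted_le:
  fixes f :: "'v \<Rightarrow> 'a::{ordered_comm_monoid_add, semiring_1}"
  assumes "finite V" "\<And>p. p \<in> V \<Longrightarrow> 0 \<le> f p"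
    and "\<And>C. C \<in> components V F ends \<Longrightarrow> odd (card C) \<Longrightarrow> c \<le> (\<Sum>p\<in>C. f p)"
  shows "of_nat (odd_components V F ends) * c \<le> (\<Sum>p\<in>V. f p)"
proof -
  let ?O = "{C\<in>components V F ends. odd (card C)}"
  have sub: "C \<subseteq> V" if "C \<in> ?O" for C
    using that components_subset[of C V F ends] by simp
  have fin: "finite C" if "C \<in> ?O" for C
    by (rule finite_subset[OF sub[OF that] assms(1)])
  have disj: "C \<inter> D = {}" if "C \<in> ?O" "D \<in> ?O" "C \<noteq> D" for C D
    using that components_disjoint[of C V F ends D] by simp
  have "\<forall>C\<in>?O. finite C" "\<forall>C\<in>?O. \<forall>D\<in>?O. C \<noteq> D \<longrightarrow> C \<inter> D = {}"
    using fin disj by blast+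
  then have union: "sum f (\<Union>?O) = (sum \<circ> sum) f ?O" by (rule sum.Union_disjoint)
  have "of_nat (odd_components V F ends) * c = (\<Sum>C\<in>?O. c)"
    by (simp add: odd_components_def)
  also have "\<dots> \<le> (\<Sum>C\<in>?O. \<Sum>p\<in>C. f p)"
    by (rule sum_mono) (use assms(3) in blast)
  also have "\<dots> = (\<Sum>p\<in>\<Union>?O. f p)"
    by (rule union[unfolded o_def, symmetric])
  also have "\<dots> \<le> (\<Sum>p\<in>V. f p)"
  proof (rule sum_mono2[OF assms(1)])
    show "\<Union>?O \<subseteq> V" using sub by (rule Union_least)
  qed (simp add: assms(2))
  finally show ?thesis .
qed

lemma odd_deg_join: "cubic V E ends \<Longrightarrow> is_join V E ends J \<Longrightarrow> p \<in> V \<Longrightarrow> odd (deg J ends p)"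
  by (simp add: is_join_def cubic_def)

lemma deg_Diff_Int:
  assumes "finite J"
  shows "deg J ends p = deg (J - A) ends p + deg (J \<inter> A) ends p"
proof -
  have "deg J ends p = card ({e\<in>J - A. p \<in> ends e} \<union> {e\<in>J \<inter> A. p \<in> ends e})"
    unfolding deg_def by (rule arg_cong[where f = card]) blast
  also have "\<dots> = deg (J - A) ends p + deg (J \<inter> A) ends p"
    unfolding deg_def by (rule card_Un_disjoint) (use assms in auto)
  finally show ?thesis .
qed

lemma odd_component_join_parity:
  assumes "cubic V E ends" "is_join V E ends J" "K \<in> components V (E - A) ends" "odd (card K)"
  shows "odd (\<Sum>p\<in>K. deg (J \<inter> A) ends p)"
proof -
  have mg: "multigraph V E ends" using assms(1) by (simp add: cubic_def)
  have finE: "finite E" using mg by (simp add: multigraph_def)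
  have JE: "J \<subseteq> E" using assms(2) by (simp add: is_join_def)
  have KV: "K \<subseteq> V" using components_subset[OF assms(3)] .
  have finK: "finite K" using KV mg by (simp add: finite_subset multigraph_def)
  have "{p\<in>K. odd (deg J ends p)} = K" using odd_deg_join[OF assms(1,2)] KV by auto
  then have odd_J: "odd (\<Sum>p\<in>K. deg J ends p)"
    using assms(4) finK by (simp add: even_sum_iff)
  have even_diff: "even (\<Sum>p\<in>K. deg (J - A) ends p)"
  proof (rule even_sum_deg_if_closed[OF finK])
    show "finite (J - A)" by (rule finite_subset[OF _ finE]) (use JE in blast)
    fix e assume e: "e \<in> J - A"
    then show "card (ends e) = 2" using mg JE by (auto simp: multigraph_def)
    show "ends e \<inter> K \<noteq> {} \<Longrightarrow> ends e \<subseteq> K"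
    proof (rule components_closed[OF assms(3)])
      show "e \<in> E - A" using e JE by blast
      then show "ends e \<subseteq> V" "card (ends e) = 2" using mg by (auto simp: multigraph_def)
    qed
  qed
  have "(\<Sum>p\<in>K. deg J ends p) = (\<Sum>p\<in>K. deg (J - A) ends p) + (\<Sum>p\<in>K. deg (J \<inter> A) ends p)"
    unfolding deg_Diff_Int[OF finite_subset[OF JE finE], where A = A] by (rule sum.distrib)
  then show ?thesis using odd_J even_diff by (metis even_add)
qed

section \<open>Three joins of a cubic graph\<close>

locale three_joins =
  fixes V :: "'v set" and E :: "'e set" and ends :: "'e \<Rightarrow> 'v set"
    and I :: "'i set" and J :: "'i \<Rightarrow> 'e set"
  assumes cubic: "cubic V E ends"
    and card_I: "card I = 3"
    and joins: "i \<in> I \<Longrightarrow> is_join V E ends (J i)"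
begin

definition inc :: "'v \<Rightarrow> 'e set" where
  "inc p = {e\<in>E. p \<in> ends e}"

definition join_vertex :: "'i \<Rightarrow> 'v \<Rightarrow> bool" where
  "join_vertex i p \<longleftrightarrow> deg (J i) ends p = 3"

definition plain_vertex :: "'v \<Rightarrow> bool" where
  "plain_vertex p \<longleftrightarrow> (\<forall>i\<in>I. \<not> join_vertex i p)"

(* Unspecified for a J_i-vertex, which has three J_i-edges; every use is guarded by
   \<not> join_vertex i p or by plain_vertex p (which an incident E_0-edge forces). *)
definition join_edge :: "'i \<Rightarrow> 'v \<Rightarrow> 'e" where
  "join_edge i p = (THE e. e \<in> inc p \<and> e \<in> J i)"

definition mult :: "'e \<Rightarrow> nat" where
  "mult e = card {i\<in>I. e \<in> J i}"

lemma finite_V: "finite V" and finite_E: "finite E" and finite_I: "finite I"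
  using cubic card_I by (auto simp: cubic_def multigraph_def card_ge_0_finite)

lemma ends_subset: "e \<in> E \<Longrightarrow> ends e \<subseteq> V" and card_ends: "e \<in> E \<Longrightarrow> card (ends e) = 2"
  using cubic by (auto simp: cubic_def multigraph_def)

lemma J_subset: "i \<in> I \<Longrightarrow> J i \<subseteq> E"
  using joins by (simp add: is_join_def)

lemma finite_inc: "finite (inc p)"
  using finite_E by (simp add: inc_def)

lemma card_inc: "p \<in> V \<Longrightarrow> card (inc p) = 3"
  using cubic by (simp add: cubic_def deg_def inc_def)

lemma inc_subset_V: "y \<in> inc u \<Longrightarrow> u \<in> V"
  using ends_subset by (auto simp: inc_def)

lemma deg_join: "i \<in> I \<Longrightarrow> deg (J i) ends p = card {e\<in>inc p. e \<in> J i}"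
  unfolding deg_def inc_def by (rule arg_cong[where f = card]) (use J_subset in blast)

lemma deg_join_cases:
  assumes "i \<in> I" "p \<in> V"
  shows "deg (J i) ends p = 1 \<or> join_vertex i p"
proof -
  have "odd (deg (J i) ends p)" by (rule odd_deg_join[OF cubic joins[OF assms(1)] assms(2)])
  moreover have "deg (J i) ends p \<le> 3"
    unfolding deg_join[OF assms(1)] card_inc[OF assms(2), symmetric]
    by (rule card_mono[OF finite_inc]) blast
  ultimately show ?thesis
    unfolding join_vertex_def by (rule odd_le_3_cases)
qed

lemma join_vertex_inc: "i \<in> I \<Longrightarrow> p \<in> V \<Longrightarrow> join_vertex i p \<Longrightarrow> e \<in> inc p \<Longrightarrow> e \<in> J i"
  using card_subset_eq[OF finite_inc, of "{e\<in>inc p. e \<in> J i}"] card_inc deg_join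
  by (force simp: join_vertex_def)

lemma join_edge_unique:
  assumes "i \<in> I" "p \<in> V" "\<not> join_vertex i p"
  shows "{e\<in>inc p. e \<in> J i} = {join_edge i p}"
proof -
  have "card {e\<in>inc p. e \<in> J i} = 1"
    using deg_join_cases[OF assms(1,2)] assms(3) deg_join[OF assms(1)] by simp
  then obtain e where e: "{e\<in>inc p. e \<in> J i} = {e}" by (auto simp: card_1_singleton_iff)
  then have "join_edge i p = e" unfolding join_edge_def by blast
  then show ?thesis using e by simp
qed

lemma join_edge_inc: "i \<in> I \<Longrightarrow> p \<in> V \<Longrightarrow> \<not> join_vertex i p \<Longrightarrow> join_edge i p \<in> inc p"
  and join_edge_in_J: "i \<in> I \<Longrightarrow> p \<in> V \<Longrightarrow> \<not> join_vertex i p \<Longrightarrow> join_edge i p \<in> J i"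
  using join_edge_unique by blast+

lemma join_edge_eqI:
  "i \<in> I \<Longrightarrow> p \<in> V \<Longrightarrow> \<not> join_vertex i p \<Longrightarrow> e \<in> inc p \<Longrightarrow> e \<in> J i \<Longrightarrow> join_edge i p = e"
  by (metis (no_types, lifting) join_edge_unique mem_Collect_eq singletonD)

lemma obtain_other_indices:
  assumes "i \<in> I"
  obtains j k where "I = {i, j, k}" "i \<noteq> j" "i \<noteq> k" "j \<noteq> k"
proof -
  obtain x y z where xyz: "I = {x, y, z}" "x \<noteq> y" "y \<noteq> z" "x \<noteq> z"
    using card_I by (auto simp: card_3_iff)
  then consider "i = x" | "i = y" | "i = z" using assms by blast
  then show ?thesis
    using that xyz by cases (auto simp: insert_commute)
qed

lemma mult_eq:
  assumes "I = {i, j, k}" "i \<noteq> j" "i \<noteq> k" "j \<noteq> k"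
  shows "mult e = of_bool (e \<in> J i) + of_bool (e \<in> J j) + of_bool (e \<in> J k)"
  unfolding mult_def using card_filter_three[OF assms(2-4), of "\<lambda>l. e \<in> J l"] assms(1) by simp

lemma mult_eq_0D: "mult e = 0 \<Longrightarrow> i \<in> I \<Longrightarrow> e \<notin> J i"
  using finite_I by (auto simp: mult_def)

lemma mult_eq_3D: "mult e = 3 \<Longrightarrow> i \<in> I \<Longrightarrow> e \<in> J i"
  using card_subset_eq[OF finite_I, of "{i\<in>I. e \<in> J i}"] card_I by (force simp: mult_def)

lemma sum_mult_inc: "(\<Sum>e\<in>inc p. mult e) = (\<Sum>i\<in>I. deg (J i) ends p)"
  unfolding mult_def using sum_card_filter_swap[OF finite_inc finite_I] deg_join by simp

lemma plain_vertex_sum_mult: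
  assumes "p \<in> V" "plain_vertex p"
  shows "(\<Sum>e\<in>inc p. mult e) = 3"
proof -
  have "deg (J i) ends p = 1" if "i \<in> I" for i
    using deg_join_cases[OF that assms(1)] assms(2) that by (auto simp: plain_vertex_def)
  then show ?thesis using card_I by (simp add: sum_mult_inc)
qed

lemma plain_vertex_mult_three:
  assumes "p \<in> V" "plain_vertex p" "a \<in> inc p" "b \<in> inc p" "c \<in> inc p"
    and "a \<noteq> b" "a \<noteq> c" "b \<noteq> c"
  shows "mult a + mult b + mult c = 3"
proof -
  have "{a, b, c} = inc p"
    using assms card_inc[OF assms(1)] by (intro card_subset_eq[OF finite_inc]) auto
  moreover have "(\<Sum>e\<in>{a, b, c}. mult e) = mult a + mult b + mult c"
    using assms(6-8) by simp
  ultimately show ?thesis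
    using plain_vertex_sum_mult[OF assms(1,2)] by simp
qed

lemma plain_vertexI: "y \<in> inc p \<Longrightarrow> mult y = 0 \<Longrightarrow> plain_vertex p"
  using join_vertex_inc mult_eq_0D ends_subset by (fastforce simp: plain_vertex_def inc_def)

lemma plain_vertex_card_join_edge:
  assumes "p \<in> V" "plain_vertex p" "e \<in> inc p"
  shows "card {i\<in>I. join_edge i p = e} = mult e"
proof -
  have "join_edge i p = e \<longleftrightarrow> e \<in> J i" if "i \<in> I" for i
    using join_edge_eqI join_edge_in_J assms that by (metis plain_vertex_def)
  then show ?thesis unfolding mult_def by (metis (lifting))
qed

lemma plain_vertex_sum_join_edges:
  fixes g :: "'e \<Rightarrow> 'a::comm_semiring_1"
  assumes "p \<in> V" "plain_vertex p"
  shows "(\<Sum>i\<in>I. g (join_edge i p)) = (\<Sum>e\<in>inc p. of_nat (mult e) * g e)"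
proof -
  have "join_edge i p \<in> inc p" if "i \<in> I" for i
    using join_edge_inc[OF that assms(1)] assms(2) that by (simp add: plain_vertex_def)
  then have "(\<Sum>i\<in>I. g (join_edge i p))
      = (\<Sum>e\<in>inc p. \<Sum>i\<in>{i\<in>I. join_edge i p = e}. g (join_edge i p))"
    by (intro sum.group[symmetric] finite_I finite_inc) blast
  also have "\<dots> = (\<Sum>e\<in>inc p. of_nat (mult e) * g e)"
    by (rule sum.cong[OF refl]) (simp add: plain_vertex_card_join_edge[OF assms, symmetric])
  finally show ?thesis .
qed

end

section \<open>Charges\<close>

(* The charge of a vertex that is not a J_i-vertex, when its J_i-edge lies in m joins; the flag
   says whether the vertex is a J-vertex of none of the three joins. *)
definition base_charge :: "bool \<Rightarrow> nat \<Rightarrow> int" where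
  "base_charge plain m = (if m = 2 then 6 else if m = 3 then (if plain then 8 else 12) else 0)"

lemma mult_base_charge_le: "int m * base_charge True m \<le> 12 * of_bool (m = 0) + 12 * int m - 12"
  by (cases "m \<le> 3") (auto simp: base_charge_def le_Suc_eq numeral_3_eq_3 numeral_2_eq_2)

context three_joins
begin

definition triple_vertex :: "'v \<Rightarrow> bool" where
  "triple_vertex v \<longleftrightarrow> v \<in> V \<and> plain_vertex v \<and> (\<exists>x\<in>inc v. mult x = 3)"

lemma triple_vertex_join_edge:
  assumes "triple_vertex v" "i \<in> I"
  shows "mult (join_edge i v) = 3"
proof -
  obtain x where x: "x \<in> inc v" "mult x = 3" and v: "v \<in> V" "plain_vertex v"
    using assms(1) by (auto simp: triple_vertex_def)
  have "\<not> join_vertex i v" using v(2) assms(2) by (simp add: plain_vertex_def)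
  then have "join_edge i v = x"
    by (rule join_edge_eqI[OF assms(2) v(1) _ x(1) mult_eq_3D[OF x(2) assms(2)]])
  then show ?thesis using x(2) by simp
qed

lemma triple_vertex_E0_edges:
  assumes "triple_vertex v"
  obtains y z where "y \<in> inc v" "z \<in> inc v" "y \<noteq> z" "mult y = 0" "mult z = 0"
proof -
  obtain x where x: "x \<in> inc v" "mult x = 3" and v: "v \<in> V" "plain_vertex v"
    using assms by (auto simp: triple_vertex_def)
  have "card (inc v - {x}) = 2"
    using card_inc[OF v(1)] x(1) finite_inc by (simp add: card_Diff_singleton)
  then obtain y z where yz: "inc v - {x} = {y, z}" "y \<noteq> z" by (auto simp: card_2_iff)
  then have "y \<in> inc v" "z \<in> inc v" "x \<noteq> y" "x \<noteq> z" by auto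
  then have "mult x + mult y + mult z = 3"
    using plain_vertex_mult_three[OF v x(1)] yz(2) by blast
  then show ?thesis
    using that \<open>y \<in> inc v\<close> \<open>z \<in> inc v\<close> yz(2) x(2) by simp
qed

lemma two_E0_edges_join_edge:
  assumes "y \<in> inc u" "z \<in> inc u" "y \<noteq> z" "mult y = 0" "mult z = 0" "i \<in> I"
  shows "mult (join_edge i u) = 3"
proof -
  note uV = inc_subset_V[OF assms(1)] and plain = plain_vertexI[OF assms(1,4)]
  let ?g = "join_edge i u"
  have g: "?g \<in> inc u" "?g \<in> J i"
    using join_edge_inc join_edge_in_J assms(6) uV plain by (auto simp: plain_vertex_def)
  moreover have "?g \<noteq> y" "?g \<noteq> z" using g(2) mult_eq_0D assms(4-6) by blast+
  ultimately have "mult y + mult z + mult ?g = 3"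
    using plain_vertex_mult_three[OF uV plain assms(1,2)] assms(3) by blast
  then show ?thesis using assms(4,5) by simp
qed

lemma two_in_J_mult_ge:
  assumes "c \<in> I" "i \<in> I" "c \<noteq> i" "e \<in> J c" "e \<in> J i"
  shows "2 \<le> mult e"
proof -
  have "card {c, i} \<le> card {l\<in>I. e \<in> J l}"
    by (rule card_mono) (use assms finite_I in auto)
  then show ?thesis using assms(3) by (simp add: mult_def)
qed

(* A donor gives one unit of each of its two other charges to join c. Its neighbour v gets only
   8 although it may be the only vertex of an odd component of G - J_c whose J_c-edge is shared;
   the two E_0-neighbours of v then make up the missing 4. *)
definition donor :: "'v \<Rightarrow> 'i \<Rightarrow> bool" where
  "donor u c \<longleftrightarrow> c \<in> I \<and> mult (join_edge c u) = 1 \<and>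
     (\<exists>y\<in>inc u. mult y = 0 \<and> (\<exists>v. ends y = {u, v} \<and> triple_vertex v))"

lemma donorD:
  assumes "donor u c"
  shows "c \<in> I" "u \<in> V" "plain_vertex u" "mult (join_edge c u) = 1"
  using assms plain_vertexI inc_subset_V by (auto simp: donor_def)

lemma donor_join_edge_other:
  assumes "donor u c" "i \<in> I" "i \<noteq> c"
  shows "mult (join_edge i u) = 2"
proof -
  obtain y where y: "y \<in> inc u" "mult y = 0" using assms(1) by (auto simp: donor_def)
  note u = donorD[OF assms(1)]
  have nj: "\<not> join_vertex l u" if "l \<in> I" for l using u(3) that by (simp add: plain_vertex_def)
  let ?g = "join_edge c u" and ?f = "join_edge i u"
  have g: "?g \<in> inc u" "?g \<in> J c" using join_edge_inc join_edge_in_J u(1,2) nj by blast+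
  have f: "?f \<in> inc u" "?f \<in> J i" using join_edge_inc join_edge_in_J assms(2) u(2) nj by blast+
  have "?f \<noteq> y" using f(2) mult_eq_0D[OF y(2) assms(2)] by blast
  moreover have "?g \<noteq> y" using u(4) y(2) by auto
  moreover have "?f \<noteq> ?g"
    using two_in_J_mult_ge[OF u(1) assms(2) assms(3)[symmetric] g(2)] f(2) u(4) by auto
  ultimately have "mult y + mult ?g + mult ?f = 3"
    using plain_vertex_mult_three[OF u(2,3) y(1) g(1) f(1)] by metis
  then show ?thesis using y(2) u(4) by simp
qed

lemma donor_unique: "donor u c \<Longrightarrow> donor u d \<Longrightarrow> c = d"
  using donor_join_edge_other[of u c d] donorD(1,4)[of u d] by force

definition charge :: "'v \<Rightarrow> 'i \<Rightarrow> int" where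
  "charge p i =
    (if join_vertex i p then 12
     else base_charge (plain_vertex p) (mult (join_edge i p))
       + (if donor p i then 2 else 0) - (if \<exists>c\<in>I - {i}. donor p c then 1 else 0))"

lemma charge_no_outflow:
  "\<not> join_vertex i p \<Longrightarrow> \<not> (\<exists>c\<in>I - {i}. donor p c) \<Longrightarrow>
    charge p i = base_charge (plain_vertex p) (mult (join_edge i p)) + (if donor p i then 2 else 0)"
  by (simp add: charge_def)

lemma charge_donor_other:
  assumes "donor u c" "i \<in> I" "i \<noteq> c"
  shows "charge u i = 5"
proof -
  have "\<not> join_vertex i u" using donorD(3)[OF assms(1)] assms(2) by (simp add: plain_vertex_def)
  moreover have "\<not> donor u i" using donor_unique[OF assms(1)] assms(3) by blast
  moreover have "\<exists>c\<in>I - {i}. donor u c" using assms donorD(1)[OF assms(1)] by blast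
  ultimately show ?thesis
    using donor_join_edge_other[OF assms] by (simp add: charge_def base_charge_def)
qed

lemma charge_triple_vertex:
  assumes "triple_vertex v" "i \<in> I"
  shows "charge v i = 8"
proof -
  have v: "plain_vertex v" using assms(1) by (simp add: triple_vertex_def)
  have "\<not> donor v c" for c
    using donorD(1,4)[of v c] triple_vertex_join_edge[OF assms(1)] by force
  then show ?thesis
    using v assms(2) triple_vertex_join_edge[OF assms]
    by (simp add: charge_def base_charge_def plain_vertex_def)
qed

lemma charge_nonneg:
  assumes "i \<in> I"
  shows "0 \<le> charge p i"
proof (cases "\<exists>c\<in>I - {i}. donor p c")
  case True
  then show ?thesis using charge_donor_other assms by fastforce
next
  case False
  then show ?thesis by (simp add: charge_def base_charge_def)
qed

lemma charge_le_12: "charge p i \<le> 12"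
  using donorD(4)[of p i] by (simp add: charge_def base_charge_def)

lemma sum_charge_plain_le:
  assumes "plain_vertex p"
  shows "(\<Sum>i\<in>I. charge p i) \<le> (\<Sum>i\<in>I. base_charge True (mult (join_edge i p)))"
proof -
  define transfer where
    "transfer i = (if donor p i then 2 else 0) - (if \<exists>c\<in>I - {i}. donor p c then 1 else (0::int))"
    for i
  have "charge p i = base_charge True (mult (join_edge i p)) + transfer i" if "i \<in> I" for i
    using assms that by (simp add: charge_def plain_vertex_def transfer_def)
  then have "(\<Sum>i\<in>I. charge p i) = (\<Sum>i\<in>I. base_charge True (mult (join_edge i p))) + sum transfer I"
    by (simp add: sum.distrib)
  moreover have "sum transfer I \<le> 0"
  proof (cases "\<exists>c. donor p c")
    case True
    then obtain c where c: "donor p c" by blast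
    obtain j k where I: "I = {c, j, k}" "c \<noteq> j" "c \<noteq> k" "j \<noteq> k"
      using obtain_other_indices[OF donorD(1)[OF c]] by blast
    have "donor p l \<longleftrightarrow> l = c" for l using donor_unique[OF c] c by blast
    then have "transfer c = 2" "transfer j = -1" "transfer k = -1" using I by (auto simp: transfer_def)
    then show ?thesis using I by simp
  next
    case False
    then show ?thesis by (simp add: transfer_def)
  qed
  ultimately show ?thesis by simp
qed

lemma sum_charge_le:
  assumes "p \<in> V"
  shows "(\<Sum>i\<in>I. charge p i)
    \<le> 12 * int (card {e\<in>inc p. mult e = 0}) + 36 * int (card {i\<in>I. join_vertex i p})"
proof (cases "plain_vertex p")
  case False
  then have "{i\<in>I. join_vertex i p} \<noteq> {}" by (auto simp: plain_vertex_def)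
  then have "1 \<le> card {i\<in>I. join_vertex i p}" using finite_I by (simp add: Suc_le_eq card_gt_0_iff)
  have "(\<Sum>i\<in>I. charge p i) \<le> (\<Sum>i\<in>I. 12)" by (rule sum_mono) (rule charge_le_12)
  also have "\<dots> = 36" using card_I by simp
  finally show ?thesis using \<open>1 \<le> card {i\<in>I. join_vertex i p}\<close> by linarith
next
  case True
  have "(\<Sum>i\<in>I. charge p i) \<le> (\<Sum>i\<in>I. base_charge True (mult (join_edge i p)))"
    by (rule sum_charge_plain_le[OF True])
  also have "\<dots> = (\<Sum>e\<in>inc p. int (mult e) * base_charge True (mult e))"
    by (rule plain_vertex_sum_join_edges[OF assms True])
  also have "\<dots> \<le> (\<Sum>e\<in>inc p. 12 * of_bool (mult e = 0) + 12 * int (mult e) - 12)"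
    by (rule sum_mono) (rule mult_base_charge_le)
  also have "\<dots> = 12 * int (card {e\<in>inc p. mult e = 0}) + 12 * int (\<Sum>e\<in>inc p. mult e)
      - 12 * int (card (inc p))"
    using finite_inc
    by (simp add: sum.distrib sum_subtractf sum_distrib_left[symmetric] Int_def conj_commute)
  also have "\<dots> = 12 * int (card {e\<in>inc p. mult e = 0})"
    using plain_vertex_sum_mult[OF assms True] card_inc[OF assms] by simp
  finally show ?thesis by simp
qed

section \<open>Every odd component collects charge 12\<close>

lemma mult_le_3: "mult e \<le> 3"
  unfolding mult_def card_I[symmetric] by (rule card_mono[OF finite_I]) blast

lemma component_E0_neighbour:
  assumes "K \<in> components V (E - J i) ends" "i \<in> I"
    and "y \<in> inc u" "mult y = 0" "ends y = {u, v}" "u \<in> K"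
  shows "v \<in> K"
proof -
  have y: "y \<in> E - J i" using assms(2-4) mult_eq_0D by (auto simp: inc_def)
  have "ends y \<subseteq> K"
  proof (rule components_closed[OF assms(1) y])
    show "ends y \<subseteq> V" "card (ends y) = 2" using y ends_subset card_ends by auto
    show "ends y \<inter> K \<noteq> {}" using assms(5,6) by auto
  qed
  then show ?thesis using assms(5) by simp
qed

lemma odd_card_join_edges_in:
  assumes "i \<in> I" "j \<in> I" "K \<in> components V (E - J i) ends" "odd (card K)"
    and "\<forall>p\<in>K. \<not> join_vertex i p"
  shows "odd (card {p\<in>K. join_edge i p \<in> J j})"
proof -
  have KV: "K \<subseteq> V" by (rule components_subset[OF assms(3)])
  have "deg (J j \<inter> J i) ends p = of_bool (join_edge i p \<in> J j)" if "p \<in> K" for p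
  proof -
    have "{e\<in>J j \<inter> J i. p \<in> ends e} = {e\<in>inc p. e \<in> J i} \<inter> J j"
      using J_subset[OF assms(1)] by (auto simp: inc_def)
    also have "\<dots> = {join_edge i p} \<inter> J j"
      using join_edge_unique[OF assms(1)] KV that assms(5) by auto
    finally show ?thesis by (simp add: deg_def)
  qed
  then have "(\<Sum>p\<in>K. deg (J j \<inter> J i) ends p) = card {p\<in>K. join_edge i p \<in> J j}"
    using finite_subset[OF KV finite_V] by (simp add: Int_def)
  then show ?thesis
    using odd_component_join_parity[OF cubic joins[OF assms(2)] assms(3,4)] by simp
qed

lemma odd_component_heavy_vertices:
  assumes "i \<in> I" "K \<in> components V (E - J i) ends" "odd (card K)"
    and "\<forall>p\<in>K. \<not> join_vertex i p"
  shows "(\<exists>p\<in>K. \<exists>q\<in>K. p \<noteq> q \<and> 2 \<le> mult (join_edge i p) \<and> 2 \<le> mult (join_edge i q))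
    \<or> (\<exists>p\<in>K. mult (join_edge i p) = 3 \<and> (\<forall>q\<in>K - {p}. mult (join_edge i q) = 1))"
proof -
  obtain j k where I: "I = {i, j, k}" "i \<noteq> j" "i \<noteq> k" "j \<noteq> k"
    using obtain_other_indices[OF assms(1)] by blast
  define S where "S l = {p\<in>K. join_edge i p \<in> J l}" for l
  have mult: "mult (join_edge i p) = 1 + of_bool (p \<in> S j) + of_bool (p \<in> S k)" if "p \<in> K" for p
    using mult_eq[OF I] join_edge_in_J[OF assms(1)] components_subset[OF assms(2)] assms(4) that
    by (auto simp: S_def)
  have "odd (card (S l))" if "l \<in> I" for l
    unfolding S_def by (rule odd_card_join_edges_in[OF assms(1) that assms(2-4)])
  then have "S j \<noteq> {}" "S k \<noteq> {}" using I by fastforce+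
  then obtain p where p: "p \<in> S j" by blast
  show ?thesis
  proof (cases "\<exists>q\<in>S j \<union> S k. q \<noteq> p")
    case True
    then obtain q where "q \<in> S j \<union> S k" "q \<noteq> p" by blast
    then show ?thesis using p mult by (intro disjI1) (auto simp: S_def)
  next
    case False
    obtain q where "q \<in> S k" using \<open>S k \<noteq> {}\<close> by blast
    moreover have "q = p" using False \<open>q \<in> S k\<close> by blast
    ultimately have "p \<in> S k" by simp
    then show ?thesis using p False mult by (intro disjI2) (auto simp: S_def)
  qed
qed

lemma charge_donor_self:
  assumes "donor u i" "\<not> (\<exists>c\<in>I - {i}. donor u c)"
  shows "charge u i = 2"
proof -
  have "\<not> join_vertex i u" using donorD[OF assms(1)] by (simp add: plain_vertex_def)
  then show ?thesis
    using charge_no_outflow assms donorD(4)[OF assms(1)] by (simp add: base_charge_def)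
qed

lemma charge_heavy:
  assumes "\<not> join_vertex i p" "\<not> (\<exists>c\<in>I - {i}. donor p c)" "2 \<le> mult (join_edge i p)"
  shows "6 \<le> charge p i"
  using charge_no_outflow[OF assms(1,2)] assms(3) mult_le_3[of "join_edge i p"]
  by (auto simp: base_charge_def)

lemma sum_charge_subset_component:
  assumes "i \<in> I" "K \<in> components V (E - J i) ends" "A \<subseteq> K"
  shows "(\<Sum>p\<in>A. charge p i) \<le> (\<Sum>p\<in>K. charge p i)"
proof (rule sum_mono2[OF _ assms(3)])
  show "finite K" using finite_subset[OF components_subset[OF assms(2)] finite_V] .
qed (use charge_nonneg[OF assms(1)] in blast)

lemma triple_vertex_component_charge:
  assumes i: "i \<in> I" and K: "K \<in> components V (E - J i) ends"
    and p: "p \<in> K" "triple_vertex p"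
    and light: "\<forall>q\<in>K - {p}. mult (join_edge i q) = 1"
    and no_outflow: "\<forall>u\<in>K. \<not> (\<exists>c\<in>I - {i}. donor u c)"
  shows "12 \<le> (\<Sum>q\<in>K. charge q i)"
proof -
  have neighbour: "\<exists>u. ends y = {u, p} \<and> u \<in> K - {p} \<and> charge u i = 2"
    if y: "y \<in> inc p" "mult y = 0" for y
  proof -
    obtain u where u: "ends y = {p, u}" "u \<noteq> p"
      using card_2_obtain_other[of "ends y" p] card_ends y(1) by (auto simp: inc_def)
    have uK: "u \<in> K" by (rule component_E0_neighbour[OF K i y u(1) p(1)])
    have "y \<in> inc u" "ends y = {u, p}" using y(1) u(1) by (auto simp: inc_def)
    then have "donor u i"
      using i light uK u(2) y(2) p(2) by (auto simp: donor_def)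
    then have "charge u i = 2" using charge_donor_self no_outflow uK by blast
    then show ?thesis using \<open>ends y = {u, p}\<close> uK u(2) by blast
  qed
  obtain y z where yz: "y \<in> inc p" "z \<in> inc p" "y \<noteq> z" "mult y = 0" "mult z = 0"
    using triple_vertex_E0_edges[OF p(2)] by blast
  obtain u where u: "ends y = {u, p}" "u \<in> K - {p}" "charge u i = 2"
    using neighbour[OF yz(1,4)] by blast
  obtain w where w: "ends z = {w, p}" "w \<in> K - {p}" "charge w i = 2"
    using neighbour[OF yz(2,5)] by blast
  have "u \<noteq> w"
  proof
    assume "u = w"
    have "y \<in> inc u" "z \<in> inc u" using yz(1,2) u(1) w(1) \<open>u = w\<close> by (auto simp: inc_def)
    then have "mult (join_edge i u) = 3" by (rule two_E0_edges_join_edge[OF _ _ yz(3-5) i])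
    then show False using light u(2) by simp
  qed
  moreover have "p \<noteq> u" "p \<noteq> w" using u(2) w(2) by auto
  ultimately have "(\<Sum>q\<in>{p, u, w}. charge q i) = 12"
    using charge_triple_vertex[OF p(2) i] u(3) w(3) by simp
  moreover have "{p, u, w} \<subseteq> K" using p(1) u(2) w(2) by blast
  ultimately show ?thesis using sum_charge_subset_component[OF i K] by metis
qed

lemma donor_component_charge:
  assumes i: "i \<in> I" and K: "K \<in> components V (E - J i) ends"
    and u: "u \<in> K" "donor u c" "c \<noteq> i"
  shows "12 \<le> (\<Sum>p\<in>K. charge p i)"
proof -
  obtain y v where y: "y \<in> inc u" "mult y = 0" "ends y = {u, v}" "triple_vertex v"
    using u(2) by (auto simp: donor_def)
  have "v \<in> K" by (rule component_E0_neighbour[OF K i y(1-3) u(1)])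
  moreover have "u \<noteq> v"
  proof -
    have "card (ends y) = 2" using y(1) card_ends by (simp add: inc_def)
    then show ?thesis using y(3) by (cases "u = v") simp_all
  qed
  ultimately have "(\<Sum>p\<in>{u, v}. charge p i) = 13"
    using charge_donor_other[OF u(2) i] u(3) charge_triple_vertex[OF y(4) i] by simp
  then show ?thesis
    using sum_charge_subset_component[OF i K, of "{u, v}"] u(1) \<open>v \<in> K\<close> by simp
qed

lemma odd_component_charge_no_outflow:
  assumes i: "i \<in> I" and K: "K \<in> components V (E - J i) ends" and odd: "odd (card K)"
    and no_join: "\<forall>p\<in>K. \<not> join_vertex i p"
    and no_outflow: "\<forall>u\<in>K. \<not> (\<exists>c\<in>I - {i}. donor u c)"
  shows "12 \<le> (\<Sum>p\<in>K. charge p i)"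
proof -
  note mono = sum_charge_subset_component[OF i K]
  note heavy = charge_heavy[of i, OF bspec[OF no_join] bspec[OF no_outflow]]
  from odd_component_heavy_vertices[OF i K odd no_join] show ?thesis
  proof (elim disjE bexE conjE)
    fix p q assume pq: "p \<in> K" "q \<in> K" "p \<noteq> q"
      "2 \<le> mult (join_edge i p)" "2 \<le> mult (join_edge i q)"
    then have "6 \<le> charge p i" "6 \<le> charge q i" using heavy by auto
    then have "12 \<le> (\<Sum>x\<in>{p, q}. charge x i)" using pq(3) by simp
    then show ?thesis using mono[of "{p, q}"] pq by simp
  next
    fix p assume p: "p \<in> K" "mult (join_edge i p) = 3" "\<forall>q\<in>K - {p}. mult (join_edge i q) = 1"
    have pV: "p \<in> V" using components_subset[OF K] p(1) by blast
    show ?thesis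
    proof (cases "plain_vertex p")
      case True
      have "join_edge i p \<in> inc p" using join_edge_inc[OF i pV] p(1) no_join by blast
      then have "triple_vertex p" using True pV p(2) unfolding triple_vertex_def by blast
      then show ?thesis
        using triple_vertex_component_charge[OF i K p(1) _ p(3) no_outflow] by blast
    next
      case False
      then have "12 \<le> charge p i"
        using charge_no_outflow no_join no_outflow p(1,2) by (simp add: base_charge_def)
      then show ?thesis using mono[of "{p}"] p(1) by simp
    qed
  qed
qed

lemma odd_component_charge:
  assumes i: "i \<in> I" and K: "K \<in> components V (E - J i) ends" and odd: "odd (card K)"
  shows "12 \<le> (\<Sum>p\<in>K. charge p i)"
proof -
  consider (join) p where "p \<in> K" "join_vertex i p"
    | (outflow) u c where "u \<in> K" "donor u c" "c \<in> I - {i}"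
    | (neither) "\<forall>p\<in>K. \<not> join_vertex i p" "\<forall>u\<in>K. \<not> (\<exists>c\<in>I - {i}. donor u c)"
    by blast
  then show ?thesis
  proof cases
    case join
    then show ?thesis
      using sum_charge_subset_component[OF i K, of "{p}"] by (simp add: charge_def)
  next
    case outflow
    then show ?thesis using donor_component_charge[OF i K] by blast
  next
    case neither
    then show ?thesis by (rule odd_component_charge_no_outflow[OF i K odd])
  qed
qed

lemma odd_components_charge:
  assumes "i \<in> I"
  shows "12 * int (odd_components V (E - J i) ends) \<le> (\<Sum>p\<in>V. charge p i)"
proof -
  have "of_nat (odd_components V (E - J i) ends) * 12 \<le> (\<Sum>p\<in>V. charge p i)"
    by (rule odd_components_weighted_le)
      (use finite_V charge_nonneg odd_component_charge assms in auto)
  then show ?thesis by (simp add: mult.commute)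
qed

lemma sum_card_E0_inc: "(\<Sum>p\<in>V. card {e\<in>inc p. mult e = 0}) = 2 * card {e\<in>E. mult e = 0}"
proof -
  have "(\<Sum>p\<in>V. card {e\<in>inc p. mult e = 0}) = (\<Sum>p\<in>V. card {e\<in>{e\<in>E. mult e = 0}. p \<in> ends e})"
    by (rule sum.cong[OF refl]) (auto simp: inc_def intro: arg_cong[where f = card])
  also have "\<dots> = (\<Sum>e\<in>{e\<in>E. mult e = 0}. card {p\<in>V. p \<in> ends e})"
    by (rule sum_card_filter_swap) (simp_all add: finite_V finite_E)
  also have "\<dots> = (\<Sum>e\<in>{e\<in>E. mult e = 0}. 2)"
  proof (rule sum.cong[OF refl])
    fix e assume "e \<in> {e\<in>E. mult e = 0}"
    then have "{p\<in>V. p \<in> ends e} = ends e" "card (ends e) = 2"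
      using ends_subset card_ends by auto
    then show "card {p\<in>V. p \<in> ends e} = 2" by simp
  qed
  finally show ?thesis by simp
qed

lemma sum_card_join_vertex: "(\<Sum>p\<in>V. card {i\<in>I. join_vertex i p}) = (\<Sum>i\<in>I. n_join V ends (J i))"
  by (simp add: sum_card_filter_swap[OF finite_V finite_I] n_join_def join_vertex_def)

lemma sum_odd_components_le:
  "12 * (\<Sum>i\<in>I. odd_components V (E - J i) ends)
    \<le> 24 * card {e\<in>E. mult e = 0} + 36 * (\<Sum>i\<in>I. n_join V ends (J i))"
proof -
  have "int (12 * (\<Sum>i\<in>I. odd_components V (E - J i) ends))
      = (\<Sum>i\<in>I. 12 * int (odd_components V (E - J i) ends))"
    by (simp add: sum_distrib_left)
  also have "\<dots> \<le> (\<Sum>i\<in>I. \<Sum>p\<in>V. charge p i)"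
    by (rule sum_mono) (rule odd_components_charge)
  also have "\<dots> = (\<Sum>p\<in>V. \<Sum>i\<in>I. charge p i)" by (rule sum.swap)
  also have "\<dots> \<le> (\<Sum>p\<in>V. 12 * int (card {e\<in>inc p. mult e = 0}) + 36 * int (card {i\<in>I. join_vertex i p}))"
    by (rule sum_mono) (rule sum_charge_le)
  also have "\<dots> = 12 * int (\<Sum>p\<in>V. card {e\<in>inc p. mult e = 0})
      + 36 * int (\<Sum>p\<in>V. card {i\<in>I. join_vertex i p})"
    by (simp add: sum.distrib sum_distrib_left)
  finally show ?thesis unfolding sum_card_E0_inc sum_card_join_vertex by linarith
qed

end

theorem theorem2p3:
  fixes V :: "'v set" and E :: "'e set" and ends :: "'e \<Rightarrow> 'v set"
    and J1 J2 J3 :: "'e set" and k :: real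
  assumes "cubic V E ends" and "bridgeless V E ends"
    and "is_join V E ends J1" and "is_join V E ends J2" and "is_join V E ends J3"
    and "k = real (card (E_zero E J1 J2 J3))
              + 3 / 2 * real (n_join V ends J1 + n_join V ends J2 + n_join V ends J3)"
  shows "real (odd_components V (E - J1) ends + odd_components V (E - J2) ends
               + odd_components V (E - J3) ends) \<le> 2 * k"
proof -
  define J where "J = (\<lambda>i::nat. [J1, J2, J3] ! i)"
  interpret three_joins V E ends "{0, 1, 2}" J
    by unfold_locales (use assms(1,3-5) in \<open>auto simp: J_def\<close>)
  have "{e\<in>E. mult e = 0} = E_zero E J1 J2 J3"
    using mult_eq[of 0 1 2] by (auto simp: E_zero_def J_def)
  then have "12 * (odd_components V (E - J1) ends + odd_components V (E - J2) ends
        + odd_components V (E - J3) ends)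
      \<le> 24 * card (E_zero E J1 J2 J3) + 36 * (n_join V ends J1 + n_join V ends J2 + n_join V ends J3)"
    using sum_odd_components_le by (simp add: J_def)
  from of_nat_mono[OF this, where 'a = real] show ?thesis
    using assms(6) by (simp add: field_simps)
qed

end
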